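(* Let $G$ be a countable group, and identify $\mathbf{P}_G$ with $\{0,1\}^G$ with the product topology. Then the family of all sparse subsets of $G$ is a coanalytic subset of $\mathbf{P}_G$, and the family of all $P$-small subsets of $G$ is an analytic subset of $\mathbf{P}_G$.
   Context: $\mathbf{P}_G$ is the power set of $G$, identified with $\{0,1\}^G$ via characteristic functions (a Polish space when $G$ is countable). A subset $A\subseteq G$ is sparse if for every infinite subset $X\subseteq G$ there is a finite subset $F\subseteq X$ such that $\bigcap_{g\in F}gA$ is finite. $A$ is $P$-small if there is an injective sequence $(g_n)_{n\in\omega}$ in $G$ such that the sets $g_nA$, $n\in\omega$, are pairwise disjoint. A subset of a Polish space is analytic if it is a continuous image of a Polish space, and coanalytic if its complement is analytic. *)

theory Defs
  imports "HOL-Analysis.Analysis" "HOL-Algebra.Coset"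
begin

definition Polish_top :: "'b topology \<Rightarrow> bool" where
  "Polish_top Y \<longleftrightarrow> completely_metrizable_space Y \<and> separable_space Y"

text \<open>Every Polish space has cardinality at most the continuum, so it is homeomorphic to a
  topology on a subset of the type nat => real; hence quantifying over Polish topologies
  on that type loses no generality.\<close>
definition analytic_in :: "'a topology \<Rightarrow> 'a set \<Rightarrow> bool" where
  "analytic_in X S \<longleftrightarrow>
     (\<exists>(Y :: (nat \<Rightarrow> real) topology) f.
        Polish_top Y \<and> continuous_map Y X f \<and> f ` topspace Y = S)"

definition coanalytic_in :: "'a topology \<Rightarrow> 'a set \<Rightarrow> bool" where
  "coanalytic_in X S \<longleftrightarrow> S \<subseteq> topspace X \<and> analytic_in X (topspace X - S)"

definition PG_top :: "('a, 'm) monoid_scheme \<Rightarrow> ('a \<Rightarrow> bool) topology" where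
  "PG_top G = product_topology (\<lambda>_. discrete_topology (UNIV :: bool set)) (carrier G)"

definition set_of_char :: "('a, 'm) monoid_scheme \<Rightarrow> ('a \<Rightarrow> bool) \<Rightarrow> 'a set" where
  "set_of_char G c = {g \<in> carrier G. c g}"

definition sparse :: "('a, 'm) monoid_scheme \<Rightarrow> 'a set \<Rightarrow> bool" where
  "sparse G A \<longleftrightarrow> A \<subseteq> carrier G \<and>
     (\<forall>X. X \<subseteq> carrier G \<and> infinite X \<longrightarrow>
        (\<exists>F. F \<subseteq> X \<and> finite F \<and> F \<noteq> {} \<and> finite (\<Inter>g\<in>F. g <#\<^bsub>G\<^esub> A)))"

definition P_small :: "('a, 'm) monoid_scheme \<Rightarrow> 'a set \<Rightarrow> bool" where
  "P_small G A \<longleftrightarrow> A \<subseteq> carrier G \<and>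
     (\<exists>g :: nat \<Rightarrow> 'a. inj g \<and> range g \<subseteq> carrier G \<and>
        (\<forall>n m. n \<noteq> m \<longrightarrow> (g n <#\<^bsub>G\<^esub> A) \<inter> (g m <#\<^bsub>G\<^esub> A) = {}))"

end

theory Submission
  imports Defs
begin

text \<open>A set \<open>A\<close> fails to be sparse iff there are an injective sequence \<open>x\<^sub>n\<close> and, for each \<open>m\<close>,
  an injective sequence in \<open>x\<^sub>0 A \<inter> \<dots> \<inter> x\<^sub>m A\<close>; it is P-small iff there is an injective sequence
  \<open>g\<^sub>n\<close> with pairwise disjoint translates \<open>g\<^sub>n A\<close>. Both are existential statements about countably
  many group elements followed by conditions each involving only finitely many of these elements
  and finitely many values of the characteristic function of \<open>A\<close>. Coding the elements together
  with the characteristic function as a point of the Baire space, such conditions cut out a closed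
  set, which the decoding map sends continuously onto the family in question. Hence the non-sparse
  and the P-small sets form analytic families.\<close>

lemma second_countable_euclidean:
  "second_countable (euclidean :: 'a::second_countable_topology topology)"
proof -
  obtain \<B> :: "'a set set" where \<B>: "countable \<B>" "topological_basis \<B>"
    using ex_countable_basis by blast
  show ?thesis
    unfolding second_countable_def
  proof (intro exI conjI ballI allI impI)
    show "countable \<B>" by fact
    show "openin euclidean V" if "V \<in> \<B>" for V
      using topological_basis_open[OF \<B>(2) that] by simp
    show "\<exists>V\<in>\<B>. x \<in> V \<and> V \<subseteq> U" if "openin euclidean U \<and> x \<in> U" for U x
      using that topological_basisE[OF \<B>(2), of U x] by (metis open_openin)
  qed
qed

lemma analytic_in_closed_image:
  fixes T :: "(nat \<Rightarrow> real) set"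
  assumes "closed T" and "continuous_map (top_of_set T) X f" and "f ` T = S"
  shows "analytic_in X S"
proof -
  have "completely_metrizable_space (top_of_set T)"
    using completely_metrizable_space_closedin[OF completely_metrizable_space_euclidean]
      assms(1) closed_closedin by blast
  moreover have "separable_space (top_of_set T)"
    by (intro second_countable_imp_separable_space second_countable_subtopology
        second_countable_euclidean)
  ultimately have "Polish_top (top_of_set T)"
    by (simp add: Polish_top_def)
  then show ?thesis
    using assms(2,3) unfolding analytic_in_def by (metis topspace_euclidean_subtopology)
qed

definition depends_on :: "'k set \<Rightarrow> (('k \<Rightarrow> 'v) \<Rightarrow> 'b) \<Rightarrow> bool" where
  "depends_on J P \<longleftrightarrow> (\<forall>z z'. (\<forall>k\<in>J. z k = z' k) \<longrightarrow> P z = P z')"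

text \<open>The Baire space is represented by the closed set of real sequences with natural values.\<close>
definition nat_coords :: "(nat \<Rightarrow> real) \<Rightarrow> nat \<Rightarrow> nat" where
  "nat_coords y i = nat \<lfloor>y i\<rfloor>"

lemma nat_coords_of_nat [simp]: "nat_coords (\<lambda>i. real (z i)) = z"
  by (simp add: nat_coords_def fun_eq_iff)

lemma Nats_limit_eventually_eq:
  fixes x :: "nat \<Rightarrow> real"
  assumes "\<And>n. x n \<in> \<nat>" and "x \<longlonglongrightarrow> l"
  shows "l \<in> \<nat> \<and> (\<forall>\<^sub>F n in sequentially. x n = l)"
proof
  show l: "l \<in> \<nat>"
    using assms closed_Nats closed_sequentially by blast
  have "\<forall>\<^sub>F n in sequentially. dist (x n) l < 1"
    using assms(2) by (simp add: tendsto_iff)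
  then show "\<forall>\<^sub>F n in sequentially. x n = l"
  proof (rule eventually_mono)
    fix n assume "dist (x n) l < 1"
    with assms(1)[of n] l show "x n = l"
      by (auto simp: dist_real_def elim!: Nats_cases)
  qed
qed

lemma closed_Nats_coords_depends_on:
  assumes "finite J" and "depends_on J P"
  shows "closed {y :: nat \<Rightarrow> real. (\<forall>i. y i \<in> \<nat>) \<and> P (nat_coords y)}"
  unfolding closed_sequential_limits
proof (intro allI impI, elim conjE)
  fix x l assume x: "\<forall>n. x n \<in> {y. (\<forall>i. y i \<in> \<nat>) \<and> P (nat_coords y)}" and "x \<longlonglongrightarrow> l"
  have "isCont (\<lambda>y :: nat \<Rightarrow> real. y i) l" for i
    using continuous_on_eq_continuous_at[OF open_UNIV, of "\<lambda>y :: nat \<Rightarrow> real. y i"] by simp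
  then have "(\<lambda>n. x n i) \<longlonglongrightarrow> l i" for i
    using \<open>x \<longlonglongrightarrow> l\<close> by (rule isCont_tendsto_compose)
  with x have lim: "l i \<in> \<nat> \<and> (\<forall>\<^sub>F n in sequentially. x n i = l i)" for i
    by (intro Nats_limit_eventually_eq) auto
  have "\<forall>\<^sub>F n in sequentially. \<forall>i\<in>J. x n i = l i"
    using lim by (intro eventually_ball_finite assms(1)) auto
  then obtain n where "\<forall>i\<in>J. x n i = l i"
    by (auto simp: eventually_sequentially)
  then have "P (nat_coords (x n)) = P (nat_coords l)"
    using assms(2) by (simp add: depends_on_def nat_coords_def)
  with x lim show "l \<in> {y. (\<forall>i. y i \<in> \<nat>) \<and> P (nat_coords y)}"
    by auto
qed

lemma continuous_map_depends_on_nat_coords: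
  assumes T: "T \<subseteq> {y. \<forall>i. y i \<in> \<nat>}" and "finite K" and "depends_on K Q"
  shows "continuous_map (top_of_set T) (discrete_topology UNIV) (\<lambda>y. Q (nat_coords y))"
  unfolding continuous_map_def
proof (intro conjI allI impI)
  fix U
  have "depends_on K (\<lambda>z. Q z \<in> U)" "depends_on K (\<lambda>z. Q z \<notin> U)"
    using \<open>depends_on K Q\<close> unfolding depends_on_def by metis+
  then have "closedin (top_of_set T) (T \<inter> {y. (\<forall>i. y i \<in> \<nat>) \<and> Q (nat_coords y) \<in> U})"
    and "closedin (top_of_set T) (T \<inter> {y. (\<forall>i. y i \<in> \<nat>) \<and> Q (nat_coords y) \<notin> U})"
    using \<open>finite K\<close> by (auto intro!: closedin_closed_Int closed_Nats_coords_depends_on)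
  moreover have "T \<inter> {y. (\<forall>i. y i \<in> \<nat>) \<and> Q (nat_coords y) \<notin> U}
      = T - {y \<in> T. Q (nat_coords y) \<in> U}"
    using T by auto
  ultimately show "openin (top_of_set T) {y \<in> topspace (top_of_set T). Q (nat_coords y) \<in> U}"
    by (simp add: openin_closedin_eq)
qed auto

lemma analytic_in_product_discrete_image:
  fixes R :: "'q \<Rightarrow> (nat \<Rightarrow> nat) \<Rightarrow> bool" and F :: "(nat \<Rightarrow> nat) \<Rightarrow> 'i \<Rightarrow> 'b"
  assumes R: "\<And>q. finite (J q)" "\<And>q. depends_on (J q) (R q)"
    and F: "\<And>z. F z \<in> extensional I"
      "\<And>i. i \<in> I \<Longrightarrow> finite (K i)" "\<And>i. i \<in> I \<Longrightarrow> depends_on (K i) (\<lambda>z. F z i)"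
  shows "analytic_in (product_topology (\<lambda>_. discrete_topology UNIV) I) (F ` {z. \<forall>q. R q z})"
proof -
  define T where "T = {y :: nat \<Rightarrow> real. (\<forall>i. y i \<in> \<nat>) \<and> (\<forall>q. R q (nat_coords y))}"
  have "closed {y :: nat \<Rightarrow> real. \<forall>i. y i \<in> \<nat>}"
    using closed_Nats_coords_depends_on[of "{}" "\<lambda>_. True"] by (simp add: depends_on_def)
  moreover have "closed {y. (\<forall>i. y i \<in> \<nat>) \<and> R q (nat_coords y)}" for q
    by (rule closed_Nats_coords_depends_on[OF R])
  moreover have "T = {y. \<forall>i. y i \<in> \<nat>} \<inter> (\<Inter>q. {y. (\<forall>i. y i \<in> \<nat>) \<and> R q (nat_coords y)})"
    by (auto simp: T_def)
  ultimately have "closed T"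
    by (simp add: closed_Int closed_INT)
  moreover have "continuous_map (top_of_set T) (product_topology (\<lambda>_. discrete_topology UNIV) I)
      (\<lambda>y. F (nat_coords y))"
  proof -
    have "continuous_map (top_of_set T) (discrete_topology UNIV) (\<lambda>y. F (nat_coords y) i)"
      if "i \<in> I" for i
      by (rule continuous_map_depends_on_nat_coords[of T "K i"]) (use F that in \<open>auto simp: T_def\<close>)
    then show ?thesis
      unfolding continuous_map_componentwise using F(1) by auto
  qed
  moreover have "nat_coords ` T = {z. \<forall>q. R q z}"
  proof
    show "{z. \<forall>q. R q z} \<subseteq> nat_coords ` T"
    proof
      fix z assume "z \<in> {z. \<forall>q. R q z}"
      then have "(\<lambda>i. real (z i)) \<in> T" by (simp add: T_def)
      then show "z \<in> nat_coords ` T"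
        by (metis nat_coords_of_nat image_eqI)
    qed
  qed (auto simp: T_def)
  ultimately show ?thesis
    by (intro analytic_in_closed_image[of T]) (auto simp flip: image_image)
qed

lemma analytic_in_exists_witness:
  fixes C :: "'a set" and \<Phi> :: "'q \<Rightarrow> ('a \<Rightarrow> bool) \<Rightarrow> ('k::countable \<Rightarrow> 'a) \<Rightarrow> bool"
  assumes "countable C" and "C \<noteq> {}" and fin: "\<And>q. finite (J q)" "\<And>q. finite (K q)"
    and dep: "\<And>q c c' \<omega> \<omega>'. (\<And>a. a \<in> J q \<Longrightarrow> c a = c' a) \<Longrightarrow> (\<And>k. k \<in> K q \<Longrightarrow> \<omega> k = \<omega>' k)
      \<Longrightarrow> \<Phi> q c \<omega> = \<Phi> q c' \<omega>'"
  shows "analytic_in (product_topology (\<lambda>_. discrete_topology UNIV) C)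
           {c \<in> extensional C. \<exists>\<omega>. range \<omega> \<subseteq> C \<and> (\<forall>q. \<Phi> q c \<omega>)}"
proof -
  define pos :: "nat + 'k \<Rightarrow> nat" where "pos = to_nat"
  define char where "char z = restrict (\<lambda>a. z (pos (Inl (to_nat_on C a))) \<noteq> 0) C"
    for z :: "nat \<Rightarrow> nat"
  define wit where "wit z = (\<lambda>k. from_nat_into C (z (pos (Inr k))))" for z :: "nat \<Rightarrow> nat"
  have "analytic_in (product_topology (\<lambda>_. discrete_topology UNIV) C)
      (char ` {z. \<forall>q. \<Phi> q (char z) (wit z)})"
  proof (rule analytic_in_product_discrete_image)
    show "finite (pos ` (Inl ` to_nat_on C ` J q \<union> Inr ` K q))" for q
      using fin by simp
    show "depends_on (pos ` (Inl ` to_nat_on C ` J q \<union> Inr ` K q)) (\<lambda>z. \<Phi> q (char z) (wit z))"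
      for q
      unfolding depends_on_def char_def wit_def by (auto intro!: dep)
    show "depends_on {pos (Inl (to_nat_on C a))} (\<lambda>z. char z a)" for a
      by (simp add: depends_on_def char_def)
  qed (auto simp: char_def)
  moreover have "char ` {z. \<forall>q. \<Phi> q (char z) (wit z)}
      = {c \<in> extensional C. \<exists>\<omega>. range \<omega> \<subseteq> C \<and> (\<forall>q. \<Phi> q c \<omega>)}"
  proof (intro equalityI subsetI)
    fix c assume "c \<in> char ` {z. \<forall>q. \<Phi> q (char z) (wit z)}"
    then obtain z where "c = char z" "\<forall>q. \<Phi> q (char z) (wit z)"
      by blast
    moreover have "range (wit z) \<subseteq> C"
      using from_nat_into[OF \<open>C \<noteq> {}\<close>] by (auto simp: wit_def)
    ultimately show "c \<in> {c \<in> extensional C. \<exists>\<omega>. range \<omega> \<subseteq> C \<and> (\<forall>q. \<Phi> q c \<omega>)}"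
      by (auto simp: char_def)
  next
    fix c assume "c \<in> {c \<in> extensional C. \<exists>\<omega>. range \<omega> \<subseteq> C \<and> (\<forall>q. \<Phi> q c \<omega>)}"
    then obtain \<omega> where c: "c \<in> extensional C" and \<omega>: "range \<omega> \<subseteq> C" "\<forall>q. \<Phi> q c \<omega>"
      by blast
    define z where "z i = (case from_nat i :: nat + 'k of
        Inl n \<Rightarrow> of_bool (c (from_nat_into C n)) | Inr k \<Rightarrow> to_nat_on C (\<omega> k))" for i
    have "char z = c"
    proof
      fix a show "char z a = c a"
        using c \<open>countable C\<close> by (cases "a \<in> C")
          (auto simp: char_def z_def pos_def from_nat_into_to_nat_on extensional_def)
    qed
    moreover have "wit z = \<omega>"
    proof
      fix k
      have "\<omega> k \<in> C" using \<omega>(1) by blast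
      then show "wit z k = \<omega> k"
        using \<open>countable C\<close> by (simp add: wit_def z_def pos_def from_nat_into_to_nat_on)
    qed
    ultimately show "c \<in> char ` {z. \<forall>q. \<Phi> q (char z) (wit z)}"
      using \<omega>(2) by auto
  qed
  ultimately show ?thesis by simp
qed

lemma topspace_PG_top: "topspace (PG_top G) = extensional (carrier G)"
  by (simp add: PG_top_def PiE_def)

lemma set_of_char_subset: "set_of_char G c \<subseteq> carrier G"
  by (auto simp: set_of_char_def)

lemma (in group) mem_l_coset_iff:
  assumes "x \<in> carrier G" and "y \<in> carrier G" and "A \<subseteq> carrier G"
  shows "y \<in> x <# A \<longleftrightarrow> inv x \<otimes> y \<in> A"
proof
  assume "y \<in> x <# A"
  then obtain a where "a \<in> A" "y = x \<otimes> a"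
    by (auto simp: l_coset_def)
  with assms show "inv x \<otimes> y \<in> A"
    by (auto simp: m_assoc[symmetric])
next
  assume "inv x \<otimes> y \<in> A"
  moreover have "y = x \<otimes> (inv x \<otimes> y)"
    using assms by (simp add: m_assoc[symmetric])
  ultimately show "y \<in> x <# A"
    by (auto simp: l_coset_def)
qed

lemma l_coset_disjoint_iff:
  "(x <#\<^bsub>G\<^esub> A) \<inter> (y <#\<^bsub>G\<^esub> A) = {} \<longleftrightarrow> (\<forall>a\<in>A. \<forall>b\<in>A. x \<otimes>\<^bsub>G\<^esub> a \<noteq> y \<otimes>\<^bsub>G\<^esub> b)"
  by (auto simp: l_coset_def)

definition coset_sequences ::
    "('a, 'm) monoid_scheme \<Rightarrow> 'a set \<Rightarrow> (nat \<Rightarrow> 'a) \<Rightarrow> (nat \<Rightarrow> nat \<Rightarrow> 'a) \<Rightarrow> bool" where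
  "coset_sequences G A x w \<longleftrightarrow> inj x \<and> range x \<subseteq> carrier G \<and> (\<forall>m. inj (w m)) \<and>
     (\<forall>m n k. n \<le> m \<longrightarrow> w m k \<in> x n <#\<^bsub>G\<^esub> A)"

lemma not_sparse_imp_coset_sequences:
  fixes G :: "('a, 'm) monoid_scheme"
  assumes "A \<subseteq> carrier G" and "\<not> sparse G A"
  shows "\<exists>x w. coset_sequences G A x w"
proof -
  have "\<not> (\<forall>X. X \<subseteq> carrier G \<and> infinite X \<longrightarrow>
      (\<exists>F. F \<subseteq> X \<and> finite F \<and> F \<noteq> {} \<and> finite (\<Inter>g\<in>F. g <#\<^bsub>G\<^esub> A)))"
    using assms by (simp add: sparse_def)
  then obtain X where X: "X \<subseteq> carrier G" "infinite X"
    and X_cosets: "\<And>F. F \<subseteq> X \<Longrightarrow> finite F \<Longrightarrow> F \<noteq> {} \<Longrightarrow> infinite (\<Inter>g\<in>F. g <#\<^bsub>G\<^esub> A)"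
    by blast
  obtain x :: "nat \<Rightarrow> 'a" where x: "inj x" "range x \<subseteq> X"
    using infinite_countable_subset[OF X(2)] by blast
  have w_ex: "\<forall>m. \<exists>v :: nat \<Rightarrow> 'a. inj v \<and> range v \<subseteq> (\<Inter>n\<in>{..m}. x n <#\<^bsub>G\<^esub> A)"
  proof
    fix m
    have "infinite (\<Inter>g\<in>x ` {..m}. g <#\<^bsub>G\<^esub> A)"
      using x(2) by (intro X_cosets) auto
    then show "\<exists>v :: nat \<Rightarrow> 'a. inj v \<and> range v \<subseteq> (\<Inter>n\<in>{..m}. x n <#\<^bsub>G\<^esub> A)"
      using infinite_countable_subset by (simp add: image_image)
  qed
  obtain w :: "nat \<Rightarrow> nat \<Rightarrow> 'a"
    where w: "\<forall>m. inj (w m) \<and> range (w m) \<subseteq> (\<Inter>n\<in>{..m}. x n <#\<^bsub>G\<^esub> A)"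
    using choice[OF w_ex] by blast
  have "w m k \<in> x n <#\<^bsub>G\<^esub> A" if "n \<le> m" for m n k
  proof -
    have "w m k \<in> (\<Inter>n\<in>{..m}. x n <#\<^bsub>G\<^esub> A)"
      using w by blast
    then show ?thesis
      using that by simp
  qed
  then have "coset_sequences G A x w"
    using x X(1) w by (auto simp: coset_sequences_def)
  then show "\<exists>x w. coset_sequences G A x w"
    by blast
qed

lemma coset_sequences_imp_not_sparse:
  assumes "coset_sequences G A x w"
  shows "\<not> sparse G A"
proof
  assume "sparse G A"
  have x: "inj x" "range x \<subseteq> carrier G" and w: "\<And>m. inj (w m)"
    and w_cosets: "\<And>m n k. n \<le> m \<Longrightarrow> w m k \<in> x n <#\<^bsub>G\<^esub> A"
    using assms by (simp_all add: coset_sequences_def)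
  have "infinite (range x)"
    using x(1) by (simp add: range_inj_infinite)
  with \<open>sparse G A\<close> x(2) obtain F
    where F: "F \<subseteq> range x" "finite F" "finite (\<Inter>g\<in>F. g <#\<^bsub>G\<^esub> A)"
    unfolding sparse_def by blast
  obtain C where C: "finite C" "F = x ` C"
    using finite_subset_image[OF F(2,1)] by blast
  obtain N where "C \<subseteq> {..N}"
    using C(1) finite_nat_iff_bounded_le by blast
  then have "F \<subseteq> x ` {..N}"
    using C(2) by blast
  then have "range (w N) \<subseteq> (\<Inter>g\<in>F. g <#\<^bsub>G\<^esub> A)"
    using w_cosets by auto
  then have "finite (range (w N))"
    using F(3) by (rule finite_subset)
  then show False
    using w by (simp add: range_inj_infinite)
qed

lemma not_sparse_iff_coset_sequences:
  assumes "A \<subseteq> carrier G"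
  shows "\<not> sparse G A \<longleftrightarrow> (\<exists>x w. coset_sequences G A x w)"
  using not_sparse_imp_coset_sequences[OF assms] coset_sequences_imp_not_sparse by blast

lemma (in group) not_sparse_iff_witness:
  assumes "A \<subseteq> carrier G"
  shows "\<not> sparse G A \<longleftrightarrow> (\<exists>\<omega> :: nat + nat \<times> nat \<Rightarrow> 'a. range \<omega> \<subseteq> carrier G \<and>
           (\<forall>n n' m k k'. (n \<noteq> n' \<longrightarrow> \<omega> (Inl n) \<noteq> \<omega> (Inl n')) \<and>
              (k \<noteq> k' \<longrightarrow> \<omega> (Inr (m, k)) \<noteq> \<omega> (Inr (m, k'))) \<and>
              (n \<le> m \<longrightarrow> inv (\<omega> (Inl n)) \<otimes> \<omega> (Inr (m, k)) \<in> A)))"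
  (is "_ \<longleftrightarrow> (\<exists>\<omega>. range \<omega> \<subseteq> carrier G \<and> ?codes \<omega>)")
  unfolding not_sparse_iff_coset_sequences[OF assms]
proof
  assume "\<exists>x w. coset_sequences G A x w"
  then obtain x w where "coset_sequences G A x w"
    by blast
  then have x: "inj x" "range x \<subseteq> carrier G" and w: "\<And>m. inj (w m)"
    and w_cosets: "\<And>m n k. n \<le> m \<Longrightarrow> w m k \<in> x n <# A"
    by (simp_all add: coset_sequences_def)
  have x_carrier: "x n \<in> carrier G" for n
    using x(2) by blast
  have w_carrier: "w m k \<in> carrier G" for m k
    using w_cosets[of 0 m k] l_coset_subset_G[OF assms x_carrier] by blast
  have "inv (x n) \<otimes> w m k \<in> A" if "n \<le> m" for n m k
    using w_cosets[OF that] mem_l_coset_iff[OF x_carrier w_carrier assms] by blast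
  then have "?codes (case_sum x (case_prod w))"
    using x(1) w by (simp add: inj_eq)
  moreover have "range (case_sum x (case_prod w)) \<subseteq> carrier G"
  proof
    fix g assume "g \<in> range (case_sum x (case_prod w))"
    then obtain s where "g = case_sum x (case_prod w) s" by blast
    then show "g \<in> carrier G"
      using x_carrier w_carrier by (cases s) auto
  qed
  ultimately show "\<exists>\<omega>. range \<omega> \<subseteq> carrier G \<and> ?codes \<omega>"
    by blast
next
  assume "\<exists>\<omega>. range \<omega> \<subseteq> carrier G \<and> ?codes \<omega>"
  then obtain \<omega> where \<omega>: "range \<omega> \<subseteq> carrier G" and codes: "?codes \<omega>"
    by blast
  have \<omega>_carrier: "\<omega> s \<in> carrier G" for s
    using \<omega> by blast
  have "coset_sequences G A (\<lambda>n. \<omega> (Inl n)) (\<lambda>m k. \<omega> (Inr (m, k)))"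
    unfolding coset_sequences_def
  proof (intro conjI allI impI)
    show "inj (\<lambda>n. \<omega> (Inl n))"
      by (rule injI) (use codes in blast)
    show "inj (\<lambda>k. \<omega> (Inr (m, k)))" for m
      by (rule injI) (use codes in blast)
    show "range (\<lambda>n. \<omega> (Inl n)) \<subseteq> carrier G"
      using \<omega>_carrier by blast
    show "\<omega> (Inr (m, k)) \<in> \<omega> (Inl n) <# A" if "n \<le> m" for m n k
      using codes that mem_l_coset_iff[OF \<omega>_carrier \<omega>_carrier assms] by blast
  qed
  then show "\<exists>x w. coset_sequences G A x w"
    by blast
qed

lemma not_sparse_analytic:
  fixes G :: "('a, 'm) monoid_scheme"
  assumes "group G" and "countable (carrier G)"
  shows "analytic_in (PG_top G) {c \<in> topspace (PG_top G). \<not> sparse G (set_of_char G c)}"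
proof -
  interpret group G by fact
  \<comment> \<open>naming the element \<open>a\<close> makes the coset condition depend on finitely many data\<close>
  define \<Phi> where "\<Phi> = (\<lambda>(n, n', m, k, k', a) c (\<omega> :: nat + nat \<times> nat \<Rightarrow> 'a).
    (n \<noteq> n' \<longrightarrow> \<omega> (Inl n) \<noteq> \<omega> (Inl n')) \<and> (k \<noteq> k' \<longrightarrow> \<omega> (Inr (m, k)) \<noteq> \<omega> (Inr (m, k'))) \<and>
    (n \<le> m \<longrightarrow> inv\<^bsub>G\<^esub> (\<omega> (Inl n)) \<otimes>\<^bsub>G\<^esub> \<omega> (Inr (m, k)) = a \<longrightarrow> a \<in> set_of_char G c))"
  have "analytic_in (PG_top G)
      {c \<in> extensional (carrier G). \<exists>\<omega>. range \<omega> \<subseteq> carrier G \<and> (\<forall>q. \<Phi> q c \<omega>)}"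
    unfolding PG_top_def
    by (rule analytic_in_exists_witness[where J = "\<lambda>(n, n', m, k, k', a). {a}"
          and K = "\<lambda>(n, n', m, k, k', a). {Inl n, Inl n', Inr (m, k), Inr (m, k')}",
          OF assms(2)])
       (auto simp: \<Phi>_def set_of_char_def split: prod.splits)
  moreover have "\<not> sparse G (set_of_char G c) \<longleftrightarrow>
      (\<exists>\<omega>. range \<omega> \<subseteq> carrier G \<and> (\<forall>q. \<Phi> q c \<omega>))" for c
    unfolding not_sparse_iff_witness[OF set_of_char_subset] by (auto simp: \<Phi>_def)
  ultimately show ?thesis
    by (simp add: topspace_PG_top)
qed

lemma P_small_analytic:
  fixes G :: "('a, 'm) monoid_scheme"
  assumes "group G" and "countable (carrier G)"
  shows "analytic_in (PG_top G) {c \<in> topspace (PG_top G). P_small G (set_of_char G c)}"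
proof -
  define \<Phi> where "\<Phi> = (\<lambda>(n, m, a, b) c (g :: nat \<Rightarrow> 'a). n \<noteq> m \<longrightarrow> g n \<noteq> g m \<and>
    (a \<in> set_of_char G c \<longrightarrow> b \<in> set_of_char G c \<longrightarrow> g n \<otimes>\<^bsub>G\<^esub> a \<noteq> g m \<otimes>\<^bsub>G\<^esub> b))"
  have "carrier G \<noteq> {}"
    using group.is_monoid[OF assms(1)] monoid.one_closed by blast
  then have "analytic_in (PG_top G)
      {c \<in> extensional (carrier G). \<exists>g. range g \<subseteq> carrier G \<and> (\<forall>q. \<Phi> q c g)}"
    unfolding PG_top_def
    by (rule analytic_in_exists_witness[where J = "\<lambda>(n, m, a, b). {a, b}"
          and K = "\<lambda>(n, m, a, b). {n, m}", OF assms(2)])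
       (auto simp: \<Phi>_def set_of_char_def split: prod.splits)
  moreover have "(\<forall>q. \<Phi> q c g) \<longleftrightarrow> inj g \<and> (\<forall>n m. n \<noteq> m \<longrightarrow>
      (g n <#\<^bsub>G\<^esub> set_of_char G c) \<inter> (g m <#\<^bsub>G\<^esub> set_of_char G c) = {})" for c g
    unfolding l_coset_disjoint_iff inj_def by (auto simp: \<Phi>_def)
  then have "P_small G (set_of_char G c) \<longleftrightarrow>
      (\<exists>g. range g \<subseteq> carrier G \<and> (\<forall>q. \<Phi> q c g))" for c
    by (auto simp: P_small_def set_of_char_subset)
  ultimately show ?thesis
    by (simp add: topspace_PG_top)
qed

theorem theorem3p3:
  fixes G :: "('a, 'm) monoid_scheme"
  assumes "group G" and "countable (carrier G)"
  shows "coanalytic_in (PG_top G) {c \<in> topspace (PG_top G). sparse G (set_of_char G c)} \<and>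
         analytic_in (PG_top G) {c \<in> topspace (PG_top G). P_small G (set_of_char G c)}"
proof -
  have "topspace (PG_top G) - {c \<in> topspace (PG_top G). sparse G (set_of_char G c)}
      = {c \<in> topspace (PG_top G). \<not> sparse G (set_of_char G c)}"
    by blast
  then show ?thesis
    using not_sparse_analytic[OF assms] P_small_analytic[OF assms]
    by (simp add: coanalytic_in_def)
qed

end
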